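(* Let $X$ be a real Banach space. (a) $f \in S(X^* )$ is a w*-semidenting point of $B(X^* )$ if and only if $d_0^*(f,t) > 0$ for every $0<t<2$. (b) $X$ has the Mazur Intersection Property if and only if $d_0^*(f,t) > 0$ for every $f \in S(X^* )$ and every $t \in (0,2)$. (c) $X$ has the Uniform Mazur Intersection Property if and only if $d_0^*(t) > 0$ for every $t \in (0,2)$.
   Context: $B(\cdot)$, $S(\cdot)$ denote closed unit ball and unit sphere; $B(f,\varepsilon)$ the open ball. For $x \in S(X)$ and real $\alpha$, $S(B(X^* ), x, \alpha) := \{g \in B(X^* ) : g(x) > \alpha\}$. $f \in S(X^* )$ is a w*-semidenting point of $B(X^* )$ if for every $\varepsilon>0$ there exist $0<\alpha<1$ and $x \in S(X)$ with $S(B(X^* ),x,\alpha) \subseteq B(f,\varepsilon)$. $X$ has the Mazur Intersection Property (MIP) if every closed bounded convex subset of $X$ is the intersection of the closed balls containing it. $X$ has the Uniform MIP (UMIP) if for every $\varepsilon>0$ there is $K>0$ such that for every closed bounded convex $C \subseteq X$ and $p \in X$ with $\operatorname{diam}(C) < 1/\varepsilon$ and $d(p,C) \geq \varepsilon$, there is a closed ball $B[x_0,r_0] \supseteq C$ with $d(p, B[x_0,r_0]) \geq \varepsilon/2$ and $r_0 \leq K$. For $0<t<2$, $f \in S(X^* )$, $x \in S(X)$: $s^*(f,x,t) := \inf\{\|f+h\| - 1 : h \in X^*,\ \|h\| \geq t/4,\ h(x)=0\}$; $d^*(g,t) := \sup_{x\in S(X)} s^*(g,x,t)$; $d_0^*(f,t)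 := \sup\{s^*(g,x,t) : x \in S(X),\ g \in S(X^* ),\ \|f-g\| < t\}$; $d_0^*(t) := \inf_{f \in S(X^* )} d_0^*(f,t)$. *)

theory Defs
  imports "HOL-Analysis.Analysis"
begin

text \<open>The quantities s*, d*, d0* take values in the extended reals, so that
  inf of the empty set is +\<infinity> and sup of the empty set is -\<infinity>.\<close>

definition dual_slice :: "'a::real_normed_vector \<Rightarrow> real \<Rightarrow> ('a \<Rightarrow>\<^sub>L real) set" where
  "dual_slice x \<alpha> = {g. norm g \<le> 1 \<and> blinfun_apply g x > \<alpha>}"

definition wstar_semidenting :: "('a::real_normed_vector \<Rightarrow>\<^sub>L real) \<Rightarrow> bool" where
  "wstar_semidenting f \<longleftrightarrow> norm f = 1 \<and>
     (\<forall>\<epsilon>>0. \<exists>\<alpha> x. 0 < \<alpha> \<and> \<alpha> < 1 \<and> norm x = 1 \<and> dual_slice x \<alpha> \<subseteq> ball f \<epsilon>)"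

definition mazur_intersection_property :: "'a::real_normed_vector itself \<Rightarrow> bool" where
  "mazur_intersection_property _ \<longleftrightarrow>
     (\<forall>C::'a set. closed C \<and> bounded C \<and> convex C \<and> C \<noteq> {} \<longrightarrow>
        C = \<Inter> {cball x r | x r. C \<subseteq> cball x r})"

definition uniform_mazur_intersection_property :: "'a::real_normed_vector itself \<Rightarrow> bool" where
  "uniform_mazur_intersection_property _ \<longleftrightarrow>
     (\<forall>\<epsilon>>0. \<exists>K>0. \<forall>(C::'a set) p.
        closed C \<and> bounded C \<and> convex C \<and> C \<noteq> {} \<and> diameter C < 1 / \<epsilon> \<and> infdist p C \<ge> \<epsilon> \<longrightarrow>
        (\<exists>x0 r0. C \<subseteq> cball x0 r0 \<and> infdist p (cball x0 r0) \<ge> \<epsilon> / 2 \<and> r0 \<le> K))"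

definition s_star :: "('a::real_normed_vector \<Rightarrow>\<^sub>L real) \<Rightarrow> 'a \<Rightarrow> real \<Rightarrow> ereal" where
  "s_star f x t = Inf {ereal (norm (f + h) - 1) | h. norm h \<ge> t / 4 \<and> blinfun_apply h x = 0}"

definition d_star :: "('a::real_normed_vector \<Rightarrow>\<^sub>L real) \<Rightarrow> real \<Rightarrow> ereal" where
  "d_star g t = Sup {s_star g x t | x. norm x = 1}"

definition d0_star :: "('a::real_normed_vector \<Rightarrow>\<^sub>L real) \<Rightarrow> real \<Rightarrow> ereal" where
  "d0_star f t = Sup {s_star g x t | g x. norm x = 1 \<and> norm g = 1 \<and> norm (f - g) < t}"

definition d0_star_mod :: "'a::real_normed_vector itself \<Rightarrow> real \<Rightarrow> ereal" where
  "d0_star_mod _ t = Inf {d0_star (f :: 'a \<Rightarrow>\<^sub>L real) t | f. norm f = 1}"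

end

theory Submission
  imports Defs
begin

text \<open>
  Part (a): if a slice \<open>S(x,\<alpha>)\<close> lies in \<open>B(f,t/16)\<close> and \<open>g\<close> norms \<open>x\<close>, any \<open>g + h\<close> with
  \<open>h x = 0\<close> and norm close to 1 becomes, after normalisation, an element of the slice, so
  \<open>h\<close> must be small; hence \<open>s*(g,x,t)\<close> and \<open>d0*(f,t)\<close> are positive. Conversely, if
  \<open>s*(g,x,t) \<ge> \<delta> > 0\<close>, every element of a thin slice at \<open>x\<close>, rescaled to agree with \<open>g\<close> at
  \<open>x\<close>, is such a perturbation \<open>g + h\<close> of norm below \<open>1 + \<delta>\<close>; so \<open>\<parallel>h\<parallel> < t/4\<close> and the slice
  lies in \<open>B(f,3t/2)\<close>.

  Parts (b) and (c) reduce to (a) through the dual description of the Mazur intersection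
  property: a ball containing the half ball \<open>{y. \<parallel>y\<parallel> \<le> 1 \<and> f y \<le> 0}\<close> but missing \<open>\<eta> u\<close>
  (where \<open>f u = 1\<close>) yields a slice within \<open>14\<eta>\<close> of \<open>f\<close>; conversely, a slice close to a
  functional separating \<open>C\<close> from a point near \<open>p\<close> yields a ball containing \<open>C\<close> and far from
  \<open>p\<close>. In the uniform version all constants depend only on \<open>t\<close>, resp. \<open>\<epsilon>\<close>.

  The Hahn--Banach theorem for general normed spaces is derived from Zorn's lemma: a minimal
  sublinear functional below a given one is linear.
\<close>

section \<open>Hahn--Banach for sublinear functionals\<close>

definition sublinear :: "('a::real_vector \<Rightarrow> real) \<Rightarrow> bool" where
  "sublinear q \<longleftrightarrow> (\<forall>x y. q (x + y) \<le> q x + q y) \<and> (\<forall>c x. 0 \<le> c \<longrightarrow> q (c *\<^sub>R x) = c * q x)"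

lemma sublinear_add: "sublinear q \<Longrightarrow> q (x + y) \<le> q x + q y"
  unfolding sublinear_def by blast

lemma sublinear_scaleR: "sublinear q \<Longrightarrow> 0 \<le> c \<Longrightarrow> q (c *\<^sub>R x) = c * q x"
  unfolding sublinear_def by blast

lemma sublinear_zero: "sublinear q \<Longrightarrow> q 0 = 0"
  using sublinear_scaleR[of q 0 0] by simp

lemma sublinear_minus_le: "sublinear q \<Longrightarrow> - q (- x) \<le> q x"
  using sublinear_add[of q x "- x"] sublinear_zero[of q] by simp

lemma sublinearI:
  assumes add: "\<And>x y. q (x + y) \<le> q x + q y"
    and scale: "\<And>c x. 0 < c \<Longrightarrow> q (c *\<^sub>R x) \<le> c * q x"
    and zero: "q 0 \<le> 0"
  shows "sublinear q"
  unfolding sublinear_def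
proof (intro conjI allI impI add)
  fix c :: real and x assume "0 \<le> c"
  show "q (c *\<^sub>R x) = c * q x"
  proof (cases "c = 0")
    case True
    then show ?thesis using add[of 0 0] zero by simp
  next
    case False
    with \<open>0 \<le> c\<close> have c: "0 < c" by simp
    have "q x = q (inverse c *\<^sub>R (c *\<^sub>R x))" using c by simp
    also have "\<dots> \<le> inverse c * q (c *\<^sub>R x)" using c by (intro scale) simp
    finally have "c * q x \<le> q (c *\<^sub>R x)" using c by (simp add: field_simps)
    with scale[OF c, of x] show ?thesis by simp
  qed
qed

text \<open>The shift of \<open>q\<close> in direction \<open>a\<close> is sublinear, lies below \<open>q\<close> and takes a value at most
  \<open>-q a\<close> at \<open>-a\<close>; so a linear functional below it agrees with \<open>q\<close> at \<open>a\<close>.\<close>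
definition sublinear_shift :: "('a::real_vector \<Rightarrow> real) \<Rightarrow> 'a \<Rightarrow> 'a \<Rightarrow> real" where
  "sublinear_shift q a x = (INF t\<in>{0..}. q (x + t *\<^sub>R a) - t * q a)"

context
  fixes q :: "'a::real_vector \<Rightarrow> real"
  assumes q: "sublinear q"
begin

lemma sublinear_shift_le: "0 \<le> t \<Longrightarrow> sublinear_shift q a x \<le> q (x + t *\<^sub>R a) - t * q a"
  unfolding sublinear_shift_def
proof (rule cINF_lower)
  show "bdd_below ((\<lambda>t. q (x + t *\<^sub>R a) - t * q a) ` {0..})"
  proof (rule bdd_belowI2)
    fix t :: real assume "t \<in> {0..}"
    have "q (t *\<^sub>R a) \<le> q (x + t *\<^sub>R a) + q (- x)"
      using sublinear_add[OF q, of "x + t *\<^sub>R a" "- x"] by simp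
    then show "- q (- x) \<le> q (x + t *\<^sub>R a) - t * q a"
      using sublinear_scaleR[OF q] \<open>t \<in> {0..}\<close> by simp
  qed
qed simp

lemma sublinear_shift_greatest:
  "(\<And>t. 0 \<le> t \<Longrightarrow> m \<le> q (x + t *\<^sub>R a) - t * q a) \<Longrightarrow> m \<le> sublinear_shift q a x"
  unfolding sublinear_shift_def by (rule cINF_greatest) auto

lemma sublinear_shift_le_self: "sublinear_shift q a x \<le> q x"
  using sublinear_shift_le[of 0] by simp

lemma sublinear_shift_minus: "sublinear_shift q a (- a) \<le> - q a"
  using sublinear_shift_le[of 1 a "- a"] sublinear_zero[OF q] by simp

lemma sublinear_sublinear_shift: "sublinear (sublinear_shift q a)"
proof (rule sublinearI)
  fix x y
  have "sublinear_shift q a (x + y) - (q (y + t *\<^sub>R a) - t * q a) \<le> sublinear_shift q a x"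
    if "0 \<le> t" for t
  proof (rule sublinear_shift_greatest)
    fix s :: real assume "0 \<le> s"
    have "sublinear_shift q a (x + y) \<le> q ((x + s *\<^sub>R a) + (y + t *\<^sub>R a)) - (s + t) * q a"
      using sublinear_shift_le[of "s + t" a "x + y"] \<open>0 \<le> s\<close> \<open>0 \<le> t\<close>
      by (simp add: algebra_simps scaleR_add_left)
    also have "\<dots> \<le> q (x + s *\<^sub>R a) + q (y + t *\<^sub>R a) - (s + t) * q a"
      using sublinear_add[OF q] by simp
    finally show "sublinear_shift q a (x + y) - (q (y + t *\<^sub>R a) - t * q a)
        \<le> q (x + s *\<^sub>R a) - s * q a"
      by (simp add: algebra_simps)
  qed
  then have "sublinear_shift q a (x + y) - sublinear_shift q a x \<le> sublinear_shift q a y"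
    by (intro sublinear_shift_greatest) (auto simp: algebra_simps)
  then show "sublinear_shift q a (x + y) \<le> sublinear_shift q a x + sublinear_shift q a y"
    by simp
next
  fix c :: real and x assume c: "0 < c"
  have "sublinear_shift q a (c *\<^sub>R x) / c \<le> q (x + t *\<^sub>R a) - t * q a" if "0 \<le> t" for t
  proof -
    have "sublinear_shift q a (c *\<^sub>R x) \<le> q (c *\<^sub>R (x + t *\<^sub>R a)) - (c * t) * q a"
      using sublinear_shift_le[of "c * t" a "c *\<^sub>R x"] c that by (simp add: scaleR_add_right)
    also have "\<dots> = c * (q (x + t *\<^sub>R a) - t * q a)"
      using sublinear_scaleR[OF q, of c "x + t *\<^sub>R a"] c by (simp add: right_diff_distrib)
    finally show ?thesis using c by (simp add: pos_divide_le_eq mult.commute)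
  qed
  then have "sublinear_shift q a (c *\<^sub>R x) / c \<le> sublinear_shift q a x"
    by (rule sublinear_shift_greatest)
  then show "sublinear_shift q a (c *\<^sub>R x) \<le> c * sublinear_shift q a x"
    using c by (simp add: pos_divide_le_eq mult.commute)
next
  show "sublinear_shift q a 0 \<le> 0"
    using sublinear_shift_le_self[of a 0] sublinear_zero[OF q] by simp
qed

end

lemma INF_sublinear_le:
  assumes "\<And>q. q \<in> C \<Longrightarrow> sublinear q \<and> q \<le> p" and "q \<in> C"
  shows "(INF q\<in>C. q x) \<le> q x"
proof (rule cINF_lower[OF bdd_belowI2 \<open>q \<in> C\<close>])
  fix q' assume "q' \<in> C"
  then have "- q' (- x) \<le> q' x" "q' (- x) \<le> p (- x)"
    using assms(1) sublinear_minus_le by (auto simp: le_fun_def)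
  then show "- p (- x) \<le> q' x" by simp
qed

lemma sublinear_INF_chain:
  assumes C: "C \<noteq> {}" "\<And>q. q \<in> C \<Longrightarrow> sublinear q \<and> q \<le> p"
    and chain: "\<And>q q'. q \<in> C \<Longrightarrow> q' \<in> C \<Longrightarrow> q \<le> q' \<or> q' \<le> q"
  shows "sublinear (\<lambda>x. INF q\<in>C. q x)" (is "sublinear ?u")
proof -
  have le: "?u x \<le> q x" if "q \<in> C" for q x
    using C(2) that by (rule INF_sublinear_le)
  have greatest: "m \<le> ?u x" if "\<And>q. q \<in> C \<Longrightarrow> m \<le> q x" for m x
    using C(1) that by (rule cINF_greatest)
  show ?thesis
  proof (rule sublinearI)
    fix x y
    have "?u (x + y) - q' y \<le> ?u x" if "q' \<in> C" for q'
    proof (rule greatest)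
      fix q assume "q \<in> C"
      have "?u (x + y) \<le> q x + q' y"
        if "q'' \<in> C" "q'' \<le> q" "q'' \<le> q'" for q''
      proof -
        have "?u (x + y) \<le> q'' x + q'' y"
          using le[OF \<open>q'' \<in> C\<close>, of "x + y"] sublinear_add[of q'' x y] C(2)[OF \<open>q'' \<in> C\<close>]
          by simp
        then show ?thesis using le_funD[OF \<open>q'' \<le> q\<close>, of x] le_funD[OF \<open>q'' \<le> q'\<close>, of y]
          by simp
      qed
      from this[of q] this[of q'] show "?u (x + y) - q' y \<le> q x"
        using chain[OF \<open>q \<in> C\<close> \<open>q' \<in> C\<close>] \<open>q \<in> C\<close> \<open>q' \<in> C\<close> by auto
    qed
    then have "?u (x + y) - ?u x \<le> ?u y" by (intro greatest) (auto simp: algebra_simps)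
    then show "?u (x + y) \<le> ?u x + ?u y" by simp
  next
    fix c :: real and x assume c: "0 < c"
    have "?u (c *\<^sub>R x) / c \<le> ?u x"
    proof (rule greatest)
      fix q assume "q \<in> C"
      then have "?u (c *\<^sub>R x) \<le> c * q x"
        using le[of q "c *\<^sub>R x"] C(2) sublinear_scaleR[of q c x] c by auto
      then show "?u (c *\<^sub>R x) / c \<le> q x" using c by (simp add: pos_divide_le_eq mult.commute)
    qed
    then show "?u (c *\<^sub>R x) \<le> c * ?u x" using c by (simp add: pos_divide_le_eq mult.commute)
  next
    obtain q where "q \<in> C" using C(1) by blast
    then show "?u 0 \<le> 0" using le[of q 0] C(2) sublinear_zero[of q] by auto
  qed
qed

lemma exists_minimal_sublinear_below:
  assumes p: "sublinear p"
  obtains m where "sublinear m" "m \<le> p" "\<And>q. sublinear q \<Longrightarrow> q \<le> m \<Longrightarrow> q = m"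
proof -
  let ?S = "{q. sublinear q \<and> q \<le> p}"
  have "\<exists>m\<in>?S. \<forall>q\<in>?S. q \<le> m \<longrightarrow> q = m"
  proof (rule predicate_Zorn)
    show "partial_order_on ?S (relation_of (\<lambda>q q'. q' \<le> q) ?S)"
      by (auto simp: partial_order_on_def preorder_on_def refl_on_def trans_def antisym_def
          relation_of_def)
  next
    fix C assume "C \<in> Chains (relation_of (\<lambda>q q'. q' \<le> q) ?S)"
    then have C: "C \<subseteq> ?S" and chain: "\<And>q q'. q \<in> C \<Longrightarrow> q' \<in> C \<Longrightarrow> q \<le> q' \<or> q' \<le> q"
      by (auto simp: Chains_def relation_of_def)
    show "\<exists>u\<in>?S. \<forall>q\<in>C. u \<le> q"
    proof (cases "C = {}")
      case True
      then show ?thesis using p by auto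
    next
      case False
      let ?u = "\<lambda>x. INF q\<in>C. q x"
      have "sublinear ?u" using sublinear_INF_chain[OF False _ chain] C by blast
      moreover have "?u \<le> q" if "q \<in> C" for q
        using INF_sublinear_le[of C p q] C that by (auto simp: le_fun_def)
      moreover obtain q where "q \<in> C" using False by blast
      ultimately show ?thesis using C by (blast intro: order.trans)
    qed
  qed
  then obtain m where m: "sublinear m" "m \<le> p" and min: "\<And>q. q \<in> ?S \<Longrightarrow> q \<le> m \<Longrightarrow> q = m"
    by blast
  show ?thesis
    by (rule that[OF m]) (use min m(2) in \<open>blast intro: order.trans\<close>)
qed

lemma minimal_sublinear_linear:
  assumes m: "sublinear m" and min: "\<And>q. sublinear q \<Longrightarrow> q \<le> m \<Longrightarrow> q = m"
  shows "linear m"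
proof -
  have minus: "m (- x) = - m x" for x
  proof -
    have "sublinear_shift m x = m"
      using min sublinear_sublinear_shift[OF m] sublinear_shift_le_self[OF m] by (simp add: le_fun_def)
    then have "m (- x) \<le> - m x" using sublinear_shift_minus[OF m, of x] by simp
    then show ?thesis using sublinear_minus_le[OF m, of x] by simp
  qed
  show ?thesis
  proof (rule linearI)
    fix x y
    have "m (- x + - y) \<le> m (- x) + m (- y)" by (rule sublinear_add[OF m])
    then show "m (x + y) = m x + m y"
      using sublinear_add[OF m, of x y] minus[of "x + y"] minus[of x] minus[of y] by (simp add: add.commute)
  next
    fix c x
    show "m (c *\<^sub>R x) = c *\<^sub>R m x"
    proof (cases "0 \<le> c")
      case True
      then show ?thesis using sublinear_scaleR[OF m] by simp
    next
      case False
      then have "m ((- c) *\<^sub>R (- x)) = (- c) * m (- x)" by (intro sublinear_scaleR[OF m]) simp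
      then show ?thesis using minus[of x] by simp
    qed
  qed
qed

theorem Hahn_Banach_sublinear:
  assumes p: "sublinear p"
  obtains F where "linear F" "\<And>x. F x \<le> p x" "F a = p a"
proof -
  obtain m where m: "sublinear m" "m \<le> sublinear_shift p a"
    and min: "\<And>q. sublinear q \<Longrightarrow> q \<le> m \<Longrightarrow> q = m"
    using exists_minimal_sublinear_below[OF sublinear_sublinear_shift[OF p]] by blast
  have le: "m x \<le> p x" for x
    using le_funD[OF m(2)] sublinear_shift_le_self[OF p] order_trans by blast
  have "linear m" using m(1) min by (rule minimal_sublinear_linear)
  have "m (- a) \<le> - p a"
    using le_funD[OF m(2)] sublinear_shift_minus[OF p] order_trans by blast
  then have "p a \<le> m a" using linear_neg[OF \<open>linear m\<close>, of a] by simp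
  with le[of a] show ?thesis by (intro that[OF \<open>linear m\<close> le]) simp
qed

section \<open>Norming and separating functionals\<close>

lemma blinfun_apply_le_norm:
  fixes g :: "'a::real_normed_vector \<Rightarrow>\<^sub>L real"
  assumes "norm g \<le> 1"
  shows "g v \<le> norm v"
proof -
  have "g v \<le> norm g * norm v" using norm_blinfun[of g v] by simp
  also have "\<dots> \<le> norm v" using assms mult_right_mono[of "norm g" 1 "norm v"] by simp
  finally show ?thesis .
qed

lemma linear_le_norm_imp_blinfun:
  fixes F :: "'a::real_normed_vector \<Rightarrow> real"
  assumes F: "linear F" and le: "\<And>x. F x \<le> norm x"
  obtains g :: "'a \<Rightarrow>\<^sub>L real" where "norm g \<le> 1" "blinfun_apply g = F"
proof -
  have abs_le: "\<bar>F x\<bar> \<le> norm x" for x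
    using le[of x] le[of "- x"] linear_neg[OF F, of x] by auto
  have "bounded_linear F"
    using F abs_le by (intro bounded_linear_intro[where K=1]) (auto simp: linear_add linear_scale)
  then have "blinfun_apply (Blinfun F) = F" by (rule bounded_linear_Blinfun_apply)
  moreover from this have "norm (Blinfun F) \<le> 1" by (intro norm_blinfun_bound) (simp_all add: abs_le)
  ultimately show ?thesis by (rule that[rotated])
qed

lemma sublinear_norm: "sublinear norm"
  by (auto simp: sublinear_def norm_triangle_ineq)

lemma norming_functional:
  fixes x :: "'a::real_normed_vector"
  obtains g :: "'a \<Rightarrow>\<^sub>L real" where "norm g \<le> 1" "g x = norm x"
proof -
  obtain F where "linear F" "\<And>y. F y \<le> norm y" "F x = norm x"
    using Hahn_Banach_sublinear[OF sublinear_norm] by blast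
  then show ?thesis using that linear_le_norm_imp_blinfun[of F] by metis
qed

lemma norming_functional_unit:
  fixes x :: "'a::real_normed_vector"
  assumes "norm x = 1"
  obtains g :: "'a \<Rightarrow>\<^sub>L real" where "norm g = 1" "g x = 1"
proof -
  obtain g :: "'a \<Rightarrow>\<^sub>L real" where g: "norm g \<le> 1" "g x = 1"
    using norming_functional[of x] assms by metis
  moreover have "1 \<le> norm g" using norm_blinfun[of g x] g assms by simp
  ultimately show ?thesis using that by auto
qed

lemma norm_blinfun_approx:
  fixes f :: "'a::real_normed_vector \<Rightarrow>\<^sub>L real"
  assumes "0 \<le> b" "b < norm f"
  obtains v where "norm v = 1" "f v > b"
proof -
  have "\<exists>v. norm v = 1 \<and> f v > b"
  proof (rule ccontr)
    assume "\<not> ?thesis"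
    then have le: "f v \<le> b" if "norm v = 1" for v using that by force
    have "norm (f x) \<le> b * norm x" for x
    proof (cases "x = 0")
      case False
      define v where "v = (1 / norm x) *\<^sub>R x"
      have "norm v = 1" "norm (- v) = 1" using False by (auto simp: v_def)
      then have "\<bar>f v\<bar> \<le> b" using le[of v] le[of "- v"] by (simp add: blinfun.minus_right)
      moreover have "f x = norm x * f v" using False by (simp add: v_def blinfun.scaleR_right)
      ultimately show ?thesis
        by (simp add: abs_mult) (metis mult.commute mult_left_mono norm_ge_zero)
    qed simp
    then have "norm f \<le> b" using assms(1) by (intro norm_blinfun_bound) auto
    then show False using assms(2) by simp
  qed
  then show ?thesis using that by blast
qed

lemma infdist_greatest:
  assumes "A \<noteq> {}" "\<And>a. a \<in> A \<Longrightarrow> m \<le> dist x a"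
  shows "m \<le> infdist x A"
  unfolding infdist_notempty[OF assms(1)] by (rule cINF_greatest) (use assms in auto)

lemma infdist_approx:
  assumes "A \<noteq> {}" "0 < e"
  obtains a where "a \<in> A" "dist x a < infdist x A + e"
proof -
  have "infdist x A < infdist x A + e" using assms by simp
  then show ?thesis using that unfolding infdist_notempty[OF assms(1)]
    by (subst (asm) cINF_less_iff) (use assms in \<open>auto intro: bdd_belowI[where m=0]\<close>)
qed

lemma sublinear_infdist_convex_cone:
  fixes K :: "'a::real_normed_vector set"
  assumes K: "convex_cone K"
  shows "sublinear (\<lambda>v. infdist v K)"
proof (rule sublinearI)
  have "K \<noteq> {}" using K by (rule convex_cone_nonempty)
  fix v w
  have "infdist (v + w) K - dist w k' \<le> infdist v K" if "k' \<in> K" for k'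
  proof (rule infdist_greatest[OF \<open>K \<noteq> {}\<close>])
    fix k assume "k \<in> K"
    have "infdist (v + w) K \<le> dist (v + w) (k + k')"
      using convex_cone_add[OF K \<open>k \<in> K\<close> \<open>k' \<in> K\<close>] by (rule infdist_le)
    also have "\<dots> \<le> dist v k + dist w k'" by (rule dist_triangle_add)
    finally show "infdist (v + w) K - dist w k' \<le> dist v k" by simp
  qed
  then have "infdist (v + w) K - infdist v K \<le> infdist w K"
    by (intro infdist_greatest[OF \<open>K \<noteq> {}\<close>]) (auto simp: algebra_simps)
  then show "infdist (v + w) K \<le> infdist v K + infdist w K" by simp
next
  have "K \<noteq> {}" using K by (rule convex_cone_nonempty)
  fix c :: real and v assume c: "0 < c"
  have "infdist (c *\<^sub>R v) K / c \<le> infdist v K"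
  proof (rule infdist_greatest[OF \<open>K \<noteq> {}\<close>])
    fix k assume "k \<in> K"
    have "infdist (c *\<^sub>R v) K \<le> dist (c *\<^sub>R v) (c *\<^sub>R k)"
      using convex_cone_scaleR[OF K _ \<open>k \<in> K\<close>, of c] c by (intro infdist_le) simp
    also have "\<dots> = c * dist v k"
      using c by (simp add: dist_norm flip: scaleR_diff_right)
    finally show "infdist (c *\<^sub>R v) K / c \<le> dist v k"
      using c by (simp add: pos_divide_le_eq mult.commute)
  qed
  then show "infdist (c *\<^sub>R v) K \<le> c * infdist v K"
    using c by (simp add: pos_divide_le_eq mult.commute)
next
  show "infdist 0 K \<le> 0" using convex_cone_contains_0[OF K] by simp
qed

lemma separating_functional:
  fixes p :: "'a::real_normed_vector"
  assumes A: "convex A" "a0 \<in> A" and far: "\<And>a. a \<in> A \<Longrightarrow> d \<le> dist p a"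
  obtains g :: "'a \<Rightarrow>\<^sub>L real"
    where "norm g \<le> 1" "\<And>a. a \<in> A \<Longrightarrow> g a \<le> g p" "d \<le> g (p - a0)"
proof -
  \<comment> \<open>Hahn--Banach for the distance to the cone generated by \<open>A - p\<close>\<close>
  define K where "K = conic hull ((\<lambda>a. a - p) ` A)"
  have K: "convex_cone K"
    using A by (auto simp: K_def convex_cone_def conic_conic_hull conic_hull_eq_empty
        intro!: convex_conic_hull convex_translation_subtract)
  have K_mem: "k \<in> K \<longleftrightarrow> (\<exists>l a. k = l *\<^sub>R (a - p) \<and> 0 \<le> l \<and> a \<in> A)" for k
    by (auto simp: K_def conic_hull_explicit)
  obtain F where F: "linear F" "\<And>v. F v \<le> infdist v K" "F (p - a0) = infdist (p - a0) K"
    using Hahn_Banach_sublinear[OF sublinear_infdist_convex_cone[OF K]] by blast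
  have "F v \<le> norm v" for v
    using F(2)[of v] infdist_le[OF convex_cone_contains_0[OF K], of v] by simp
  then obtain g :: "'a \<Rightarrow>\<^sub>L real" where g: "norm g \<le> 1" "blinfun_apply g = F"
    using linear_le_norm_imp_blinfun[OF F(1)] by blast
  have "F a \<le> F p" if "a \<in> A" for a
  proof -
    have "a - p \<in> K" using that K_mem[of "a - p"] by (metis scaleR_one order.refl zero_le_one)
    then have "F (a - p) \<le> 0" using F(2)[of "a - p"] by simp
    then show ?thesis using linear_diff[OF F(1)] by simp
  qed
  moreover have "d \<le> infdist (p - a0) K"
  proof (rule infdist_greatest)
    show "K \<noteq> {}" using K by (rule convex_cone_nonempty)
    fix k assume "k \<in> K"
    then obtain l a where k: "k = l *\<^sub>R (a - p)" "0 \<le> l" "a \<in> A" using K_mem by blast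
    define b where "b = (1 / (1 + l)) *\<^sub>R a0 + (l / (1 + l)) *\<^sub>R a"
    have "b \<in> A" unfolding b_def using A k
      by (intro convexD) (auto simp: add_divide_distrib[symmetric])
    have "(1 + l) *\<^sub>R b = a0 + l *\<^sub>R a" using k(2) by (simp add: b_def scaleR_add_right)
    then have "p - a0 - k = (1 + l) *\<^sub>R (p - b)"
      by (simp add: k(1) scaleR_diff_right scaleR_add_left algebra_simps)
    then have "dist (p - a0) k = (1 + l) * dist p b" using k(2) by (simp add: dist_norm)
    moreover have "dist p b \<le> (1 + l) * dist p b" using k(2) by (simp add: algebra_simps)
    ultimately show "d \<le> dist (p - a0) k" using far[OF \<open>b \<in> A\<close>] by linarith
  qed
  ultimately show ?thesis using that g F(3) by auto
qed

lemma blinfun_le_on_cball_imp_margin: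
  fixes F :: "'a::real_normed_vector \<Rightarrow>\<^sub>L real"
  assumes "0 \<le> s" and le: "\<And>y. norm y \<le> s \<Longrightarrow> F (c + y) \<le> b"
  shows "F c + s * norm F \<le> b"
proof (cases "s = 0")
  case False
  with \<open>0 \<le> s\<close> have s: "0 < s" by simp
  have "0 \<le> (b - F c) / s" using le[of 0] s by simp
  show ?thesis
  proof (rule ccontr)
    assume "\<not> ?thesis"
    then have "(b - F c) / s < norm F" using s by (simp add: field_simps)
    then obtain v where v: "norm v = 1" "(b - F c) / s < F v"
      using norm_blinfun_approx[OF \<open>0 \<le> (b - F c) / s\<close>] by blast
    have "F (c + s *\<^sub>R v) \<le> b" using le[of "s *\<^sub>R v"] v s by simp
    then show False using v s by (simp add: blinfun.add_right blinfun.scaleR_right field_simps)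
  qed
qed (use le[of 0] in simp)

lemma separating_unit_functional:
  fixes C :: "'a::real_normed_vector set"
  assumes C: "convex C" "C \<noteq> {}" and s: "0 \<le> s" "s < d" and far: "\<And>c. c \<in> C \<Longrightarrow> d \<le> dist p c"
  obtains f :: "'a \<Rightarrow>\<^sub>L real" where "norm f = 1" "\<And>c. c \<in> C \<Longrightarrow> f c + s \<le> f p"
proof -
  \<comment> \<open>separate \<open>p\<close> from the convex set \<open>C + cball 0 s\<close>\<close>
  define A where "A = (\<Union>c\<in>C. \<Union>y\<in>cball 0 s. {c + y})"
  have "convex A" unfolding A_def using convex_sums[OF C(1) convex_cball] by simp
  obtain c0 where "c0 \<in> C" using C(2) by blast
  then have "c0 \<in> A" using s by (force simp: A_def)
  have "d - s \<le> dist p a" if "a \<in> A" for a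
  proof -
    obtain c y where "a = c + y" "c \<in> C" "norm y \<le> s" using \<open>a \<in> A\<close> by (auto simp: A_def)
    then show ?thesis using far[of c] dist_triangle[of p c a] by (simp add: dist_norm)
  qed
  then obtain F :: "'a \<Rightarrow>\<^sub>L real"
    where F: "norm F \<le> 1" "\<And>a. a \<in> A \<Longrightarrow> F a \<le> F p" "d - s \<le> F (p - c0)"
    using separating_functional[OF \<open>convex A\<close> \<open>c0 \<in> A\<close>] by blast
  have "F \<noteq> 0" using F(3) s by auto
  then have "0 < norm F" by simp
  have "F c + s * norm F \<le> F p" if "c \<in> C" for c
  proof (rule blinfun_le_on_cball_imp_margin[OF s(1)])
    fix y :: 'a assume "norm y \<le> s"
    then show "F (c + y) \<le> F p" using F(2) that by (force simp: A_def)
  qed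
  then have "(F c + s * norm F) / norm F \<le> F p / norm F" if "c \<in> C" for c
    using that \<open>0 < norm F\<close> by (simp add: divide_right_mono)
  then show ?thesis using that[of "(1 / norm F) *\<^sub>R F"] \<open>0 < norm F\<close>
    by (simp add: add_divide_distrib scaleR_blinfun.rep_eq)
qed

section \<open>Slices and the moduli \<open>s*\<close> and \<open>d0*\<close>\<close>

lemma s_star_greatest:
  fixes g :: "'a::real_normed_vector \<Rightarrow>\<^sub>L real"
  assumes "\<And>h. blinfun_apply h x = 0 \<Longrightarrow> t / 4 \<le> norm h \<Longrightarrow> \<delta> \<le> norm (g + h) - 1"
  shows "ereal \<delta> \<le> s_star g x t"
  unfolding s_star_def by (rule Inf_greatest) (use assms in auto)

lemma s_star_le:
  fixes g h :: "'a::real_normed_vector \<Rightarrow>\<^sub>L real"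
  assumes "h x = 0" "t / 4 \<le> norm h"
  shows "s_star g x t \<le> ereal (norm (g + h) - 1)"
  unfolding s_star_def by (rule Inf_lower) (use assms in auto)

lemma s_star_scaleR:
  fixes g :: "'a::real_normed_vector \<Rightarrow>\<^sub>L real"
  assumes "c \<noteq> 0"
  shows "s_star g (c *\<^sub>R x) t = s_star g x t"
  using assms by (simp add: s_star_def blinfun.scaleR_right)

lemma s_star_le_d0_star:
  fixes f g :: "'a::real_normed_vector \<Rightarrow>\<^sub>L real"
  assumes "norm x = 1" "norm g = 1" "norm (f - g) < t"
  shows "s_star g x t \<le> d0_star f t"
  unfolding d0_star_def by (rule Sup_upper) (use assms in auto)

lemma dual_sliceI: "norm (k :: 'a::real_normed_vector \<Rightarrow>\<^sub>L real) \<le> 1 \<Longrightarrow> \<alpha> < k x \<Longrightarrow> k \<in> dual_slice x \<alpha>"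
  by (simp add: dual_slice_def)

lemma dual_slice_antimono: "\<alpha> \<le> \<beta> \<Longrightarrow> dual_slice x \<beta> \<subseteq> dual_slice x \<alpha>"
  by (auto simp: dual_slice_def)

lemma norm_diff_lt_of_dual_slice:
  fixes f k :: "'a::real_normed_vector \<Rightarrow>\<^sub>L real"
  shows "dual_slice x \<alpha> \<subseteq> ball f \<epsilon> \<Longrightarrow> k \<in> dual_slice x \<alpha> \<Longrightarrow> norm (f - k) < \<epsilon>"
  by (auto simp: dist_norm)

lemma norm_diff_lt_of_dual_slice_norming:
  fixes f :: "'a::real_normed_vector \<Rightarrow>\<^sub>L real"
  assumes "dual_slice x \<alpha> \<subseteq> ball f \<epsilon>" "\<alpha> < 1" "norm x = 1"
  obtains g :: "'a \<Rightarrow>\<^sub>L real" where "norm g = 1" "g x = 1" "norm (f - g) < \<epsilon>"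
proof -
  obtain g :: "'a \<Rightarrow>\<^sub>L real" where "norm g = 1" "g x = 1" using norming_functional_unit[OF assms(3)] by blast
  then show ?thesis using that assms norm_diff_lt_of_dual_slice[OF assms(1) dual_sliceI] by simp
qed

text \<open>Normalising \<open>g + h\<close> puts it into the slice.\<close>
lemma norm_perturbation_lt_of_dual_slice:
  fixes f g h :: "'a::real_normed_vector \<Rightarrow>\<^sub>L real"
  assumes sl: "dual_slice x \<alpha> \<subseteq> ball f \<epsilon>" and x: "norm x = 1" and "0 < \<alpha>"
    and g: "g x = 1" "norm (f - g) < \<epsilon>" and h: "h x = 0" and gh: "norm (g + h) < 1 / \<alpha>"
  shows "norm h < norm (g + h) - 1 + 2 * \<epsilon>"
proof -
  define n where "n = norm (g + h)"
  have "(g + h) x = 1" using g h by (simp add: plus_blinfun.rep_eq)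
  then have "1 \<le> n" using norm_blinfun[of "g + h" x] x by (simp add: n_def)
  define k where "k = (1 / n) *\<^sub>R (g + h)"
  have "norm k = 1" using \<open>1 \<le> n\<close> by (auto simp: k_def n_def simp del: scaleR_add_right)
  moreover have "k x = 1 / n"
    using \<open>(g + h) x = 1\<close> by (simp add: k_def scaleR_blinfun.rep_eq del: scaleR_add_right)
  moreover have "\<alpha> < 1 / n"
    using \<open>1 \<le> n\<close> \<open>0 < \<alpha>\<close> gh by (simp add: n_def[symmetric] less_divide_eq mult.commute)
  ultimately have "norm (f - k) < \<epsilon>" using sl by (intro norm_diff_lt_of_dual_slice dual_sliceI) auto
  have "norm ((g + h) - k) = n - 1"
  proof -
    have "(g + h) - k = (1 - 1 / n) *\<^sub>R (g + h)" by (simp add: k_def algebra_simps)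
    then have "norm ((g + h) - k) = \<bar>1 - 1 / n\<bar> * n" by (simp add: n_def)
    also have "\<dots> = n - 1" using \<open>1 \<le> n\<close> by (simp add: abs_of_nonneg algebra_simps)
    finally show ?thesis .
  qed
  have "norm h \<le> norm ((g + h) - k) + norm (f - k) + norm (f - g)"
    using norm_triangle_ineq[of "(g + h) - k + (k - f)" "f - g"]
      norm_triangle_ineq[of "(g + h) - k" "k - f"] by (simp add: norm_minus_commute)
  then show ?thesis using \<open>norm (g + h - k) = n - 1\<close> \<open>norm (f - k) < \<epsilon>\<close> g(2) by (simp add: n_def)
qed

lemma d0_star_lower_bound_of_dual_slice:
  fixes f :: "'a::real_normed_vector \<Rightarrow>\<^sub>L real"
  assumes t: "0 < t" and \<alpha>: "0 < \<alpha>" "\<alpha> < 1" and x: "norm x = 1"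
    and sl: "dual_slice x \<alpha> \<subseteq> ball f (t / 16)"
  shows "ereal (min (t / 16) ((1 / \<alpha> - 1) / 2)) \<le> d0_star f t"
proof -
  define \<delta> where "\<delta> = min (t / 16) ((1 / \<alpha> - 1) / 2)"
  obtain g :: "'a \<Rightarrow>\<^sub>L real" where g: "norm g = 1" "g x = 1" "norm (f - g) < t / 16"
    using norm_diff_lt_of_dual_slice_norming[OF sl \<alpha>(2) x] by blast
  have "1 + \<delta> < 1 / \<alpha>" using \<alpha> by (simp add: \<delta>_def min_def field_simps)
  have "ereal \<delta> \<le> s_star g x t"
  proof (rule s_star_greatest)
    fix h :: "'a \<Rightarrow>\<^sub>L real" assume h: "h x = 0" "t / 4 \<le> norm h"
    show "\<delta> \<le> norm (g + h) - 1"
    proof (rule ccontr)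
      assume lt: "\<not> ?thesis"
      then have "norm h < norm (g + h) - 1 + 2 * (t / 16)"
        using \<open>1 + \<delta> < 1 / \<alpha>\<close>
        by (intro norm_perturbation_lt_of_dual_slice[OF sl x \<alpha>(1) g(2,3) h(1)]) simp
      moreover have "\<delta> \<le> t / 16" by (simp add: \<delta>_def)
      ultimately show False using lt h(2) t by linarith
    qed
  qed
  also have "\<dots> \<le> d0_star f t" using x g t by (intro s_star_le_d0_star) auto
  finally show ?thesis unfolding \<delta>_def .
qed

lemma s_star_pos_imp_apply_nonzero:
  fixes g :: "'a::real_normed_vector \<Rightarrow>\<^sub>L real"
  assumes "norm g = 1" "t < 4" "0 < \<delta>" "ereal \<delta> \<le> s_star g x t"
  shows "g x \<noteq> 0"
proof
  assume "g x = 0"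
  then have "s_star g x t \<le> ereal (norm (g + - g) - 1)"
    using assms(1,2) by (intro s_star_le) (auto simp: uminus_blinfun.rep_eq)
  with assms(4) have "ereal \<delta> \<le> ereal (norm (g + - g) - 1)" by (rule order_trans)
  then show False using assms(3) by simp
qed

text \<open>If \<open>s*(g,x,t) \<ge> \<delta>\<close> with \<open>g x > 0\<close>, a slice functional \<open>k\<close> rescaled to agree with
  \<open>g\<close> at \<open>x\<close> is \<open>g + h\<close> with \<open>h x = 0\<close> and norm below \<open>1 + \<delta>\<close>, so \<open>\<parallel>h\<parallel> < t/4\<close>.\<close>
lemma norm_diff_lt_of_s_star:
  fixes g k :: "'a::real_normed_vector \<Rightarrow>\<^sub>L real"
  assumes g: "norm g = 1" "0 < g x" and x: "norm x = 1" and t: "0 < t" and "0 < \<delta>"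
    and s: "ereal \<delta> \<le> s_star g x t"
    and k: "k \<in> dual_slice x (max (1 / (1 + \<delta>)) (1 / (1 + t / 4)))"
  shows "norm (k - g) < t / 2"
proof -
  have kn: "norm k \<le> 1" and kx: "max (1 / (1 + \<delta>)) (1 / (1 + t / 4)) < k x"
    using k by (auto simp: dual_slice_def)
  have "0 < 1 / (1 + \<delta>)" "1 / (1 + \<delta>) < k x" using \<open>0 < \<delta>\<close> kx by simp_all
  then have "0 < k x" by linarith
  have kx_inv: "1 / k x < 1 + \<delta>" "1 / k x < 1 + t / 4"
    using kx \<open>0 < \<delta>\<close> t \<open>0 < k x\<close> by (simp_all add: field_simps)
  define c where "c = g x / k x"
  have "0 < c" using g(2) \<open>0 < k x\<close> by (simp add: c_def)
  have "c \<le> 1 / k x"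
    using norm_blinfun[of g x] g x \<open>0 < k x\<close> by (simp add: c_def divide_right_mono)
  define h where "h = c *\<^sub>R k - g"
  have "h x = 0" using \<open>0 < k x\<close> by (simp add: h_def c_def minus_blinfun.rep_eq scaleR_blinfun.rep_eq)
  have ck: "norm (c *\<^sub>R k) \<le> c" using \<open>0 < c\<close> kn by (simp add: mult_left_le)
  have "norm h < t / 4"
  proof (rule ccontr)
    assume "\<not> ?thesis"
    then have "s_star g x t \<le> ereal (norm (g + h) - 1)" using \<open>h x = 0\<close> by (intro s_star_le) auto
    with s have "ereal \<delta> \<le> ereal (norm (g + h) - 1)" by (rule order_trans)
    then have "\<delta> \<le> norm (c *\<^sub>R k) - 1" by (simp add: h_def)
    then show False using ck \<open>c \<le> 1 / k x\<close> kx_inv by linarith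
  qed
  have "1 - t / 4 < c"
    using norm_triangle_ineq4[of "c *\<^sub>R k" h] g(1) \<open>norm h < t / 4\<close> ck by (simp add: h_def)
  moreover have "c < 1 + t / 4" using \<open>c \<le> 1 / k x\<close> kx_inv by linarith
  moreover have "norm (k - g) \<le> \<bar>1 - c\<bar> * norm k + norm h"
  proof -
    have "k - g = (1 - c) *\<^sub>R k + h" by (simp add: h_def algebra_simps)
    then show ?thesis using norm_triangle_ineq[of "(1 - c) *\<^sub>R k" h] by simp
  qed
  moreover have "\<bar>1 - c\<bar> * norm k \<le> \<bar>1 - c\<bar>" using kn by (simp add: mult_left_le)
  ultimately show ?thesis using \<open>norm h < t / 4\<close> by linarith
qed

lemma dual_slice_near_of_s_star:
  fixes f g :: "'a::real_normed_vector \<Rightarrow>\<^sub>L real"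
  assumes t: "0 < t" "t < 2" and x: "norm x = 1" and g: "norm g = 1" and fg: "norm (f - g) < t"
    and "0 < \<delta>" and s: "ereal \<delta> \<le> s_star g x t"
  obtains x' where "norm x' = 1" "dual_slice x' (max (1 / (1 + \<delta>)) (1 / (1 + t / 4))) \<subseteq> ball f (3 * t / 2)"
proof -
  have "g x \<noteq> 0" using s_star_pos_imp_apply_nonzero[OF g _ \<open>0 < \<delta>\<close> s] t by simp
  \<comment> \<open>replace \<open>x\<close> by \<open>\<plusminus>x\<close> so that \<open>g\<close> is positive there; this does not change \<open>s*\<close>\<close>
  define x' where "x' = sgn (g x) *\<^sub>R x"
  have "norm x' = 1" using x \<open>g x \<noteq> 0\<close> by (simp add: x'_def abs_sgn)
  have "g x' = sgn (g x) * g x" by (simp add: x'_def blinfun.scaleR_right)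
  also have "\<dots> = \<bar>g x\<bar>" by (metis abs_sgn mult.commute)
  finally have "g x' = \<bar>g x\<bar>" .
  then have "0 < g x'" using \<open>g x \<noteq> 0\<close> by simp
  have "sgn (g x) \<noteq> 0" using \<open>g x \<noteq> 0\<close> by (simp add: sgn_0_0)
  then have "ereal \<delta> \<le> s_star g x' t" using s by (simp add: x'_def s_star_scaleR)
  have "norm (f - k) < 3 * t / 2" if "k \<in> dual_slice x' (max (1 / (1 + \<delta>)) (1 / (1 + t / 4)))" for k
  proof -
    have "norm (k - g) < t / 2"
      using norm_diff_lt_of_s_star[OF g \<open>0 < g x'\<close> \<open>norm x' = 1\<close> t(1) \<open>0 < \<delta>\<close> \<open>ereal \<delta> \<le> s_star g x' t\<close> that] .
    then show ?thesis using fg norm_triangle_ineq[of "f - g" "g - k"] by (simp add: norm_minus_commute)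
  qed
  then have "dual_slice x' (max (1 / (1 + \<delta>)) (1 / (1 + t / 4))) \<subseteq> ball f (3 * t / 2)"
    by (auto simp: dist_norm)
  with \<open>norm x' = 1\<close> show ?thesis by (rule that)
qed

lemma dual_slice_near_of_d0_star:
  fixes f :: "'a::real_normed_vector \<Rightarrow>\<^sub>L real"
  assumes t: "0 < t" "t < 2" and "0 < c" "ereal c < d0_star f t"
  obtains x where "norm x = 1" "dual_slice x (max (1 / (1 + c)) (1 / (1 + t / 4))) \<subseteq> ball f (3 * t / 2)"
proof -
  obtain g x where "norm x = 1" "norm g = 1" "norm (f - g) < t" "ereal c < s_star g x t"
    using assms(4) by (auto simp: d0_star_def less_Sup_iff)
  then show ?thesis using dual_slice_near_of_s_star[OF t _ _ _ \<open>0 < c\<close>] that by (meson less_imp_le)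
qed

theorem wstar_semidenting_iff_d0_star_pos:
  fixes f :: "'a::real_normed_vector \<Rightarrow>\<^sub>L real"
  assumes f: "norm f = 1"
  shows "wstar_semidenting f \<longleftrightarrow> (\<forall>t. 0 < t \<and> t < 2 \<longrightarrow> 0 < d0_star f t)"
proof (intro iffI allI impI)
  fix t :: real assume "wstar_semidenting f" "0 < t \<and> t < 2"
  moreover have "0 < t / 16" using \<open>0 < t \<and> t < 2\<close> by simp
  ultimately obtain \<alpha> x where \<alpha>: "0 < \<alpha>" "\<alpha> < 1" and x: "norm x = 1" "dual_slice x \<alpha> \<subseteq> ball f (t / 16)"
    unfolding wstar_semidenting_def by blast
  have "0 < min (t / 16) ((1 / \<alpha> - 1) / 2)" using \<open>0 < t \<and> t < 2\<close> \<alpha> by (simp add: field_simps)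
  with d0_star_lower_bound_of_dual_slice[OF _ \<alpha> x] \<open>0 < t \<and> t < 2\<close> show "0 < d0_star f t"
    by (meson ereal_less(2) order_less_le_trans)
next
  assume pos: "\<forall>t. 0 < t \<and> t < 2 \<longrightarrow> 0 < d0_star f t"
  have "\<exists>\<alpha> x. 0 < \<alpha> \<and> \<alpha> < 1 \<and> norm x = 1 \<and> dual_slice x \<alpha> \<subseteq> ball f \<epsilon>" if "0 < \<epsilon>" for \<epsilon>
  proof -
    define t where "t = min (\<epsilon> / 2) 1"
    have t: "0 < t" "t < 2" "3 * t / 2 < \<epsilon>" using \<open>0 < \<epsilon>\<close> by (auto simp: t_def)
    obtain c where "0 < ereal c" "ereal c < d0_star f t"
      using pos t ereal_dense2 by blast
    then obtain x where "norm x = 1" "dual_slice x (max (1 / (1 + c)) (1 / (1 + t / 4))) \<subseteq> ball f (3 * t / 2)"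
      using dual_slice_near_of_d0_star[OF t(1,2)] by auto
    moreover have "ball f (3 * t / 2) \<subseteq> ball f \<epsilon>" using t(3) by (simp add: subset_ball)
    moreover have "0 < max (1 / (1 + c)) (1 / (1 + t / 4))" "max (1 / (1 + c)) (1 / (1 + t / 4)) < 1"
      using \<open>0 < ereal c\<close> t by (auto simp: max_def)
    ultimately show ?thesis by blast
  qed
  then show "wstar_semidenting f" using f by (simp add: wstar_semidenting_def)
qed

section \<open>The Mazur intersection property\<close>

definition half_ball :: "('a::real_normed_vector \<Rightarrow>\<^sub>L real) \<Rightarrow> 'a set" where
  "half_ball f = {y. norm y \<le> 1 \<and> f y \<le> 0}"

lemma half_ball_subset_cball: "half_ball f \<subseteq> cball 0 1"
  by (auto simp: half_ball_def)

lemma zero_in_half_ball: "0 \<in> half_ball f"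
  by (simp add: half_ball_def)

lemma closed_half_ball: "closed (half_ball f)"
proof -
  have "half_ball f = cball 0 1 \<inter> {y. f y \<le> 0}" by (auto simp: half_ball_def)
  moreover have "closed {y. f y \<le> 0}"
    by (intro closed_Collect_le continuous_on_id linear_continuous_on blinfun.bounded_linear_right)
      simp
  ultimately show ?thesis by auto
qed

lemma convex_half_ball: "convex (half_ball f)"
proof -
  have "half_ball f = cball 0 1 \<inter> blinfun_apply f -` {..0}" by (auto simp: half_ball_def)
  moreover have "convex (blinfun_apply f -` {..0})"
    by (intro convex_linear_vimage bounded_linear.linear[OF blinfun.bounded_linear_right]) simp
  ultimately show ?thesis by (simp add: convex_Int)
qed

lemma radius_nonneg_of_half_ball_subset: "half_ball f \<subseteq> cball z R \<Longrightarrow> 0 \<le> R"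
  using zero_in_half_ball[of f] zero_le_dist[of z 0] by (auto simp only: mem_cball dest!: subsetD)

lemma bounded_half_ball: "bounded (half_ball f)"
  using half_ball_subset_cball bounded_cball bounded_subset by blast

lemma exists_preimage_one:
  fixes f :: "'a::real_normed_vector \<Rightarrow>\<^sub>L real"
  assumes "norm f = 1"
  obtains u where "f u = 1" "norm u \<le> 2"
proof -
  obtain v where "norm v = 1" "1 / 2 < f v" using norm_blinfun_approx[of "1 / 2" f] assms by auto
  then show ?thesis
    using that[of "(1 / f v) *\<^sub>R v"] by (simp add: blinfun.scaleR_right field_simps)
qed

text \<open>A functional bounded by \<open>\<epsilon>\<close> on the half ball is bounded by \<open>\<epsilon>\<close> on the unit ball of
  \<open>ker f\<close>, hence is \<open>3\<epsilon>\<close>-close to a multiple of \<open>f\<close>.\<close>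
lemma norm_diff_multiple_le_of_half_ball:
  fixes f g :: "'a::real_normed_vector \<Rightarrow>\<^sub>L real"
  assumes f: "norm f = 1" and u: "f u = 1" "norm u \<le> 2" and "0 \<le> \<epsilon>"
    and g: "\<And>y. y \<in> half_ball f \<Longrightarrow> g y < \<epsilon>"
  shows "norm (g - g u *\<^sub>R f) \<le> 3 * \<epsilon>"
proof (rule norm_blinfun_bound)
  have ker: "\<bar>g w\<bar> \<le> \<epsilon> * norm w" if "f w = 0" for w
  proof (cases "w = 0")
    case False
    define y where "y = (1 / norm w) *\<^sub>R w"
    have "y \<in> half_ball f" "- y \<in> half_ball f"
      using that False by (auto simp: half_ball_def y_def blinfun.scaleR_right blinfun.minus_right)
    then have "\<bar>g y\<bar> \<le> \<epsilon>" using g[of y] g[of "- y"] by (simp add: blinfun.minus_right)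
    moreover have "g w = norm w * g y" using False by (simp add: y_def blinfun.scaleR_right)
    ultimately show ?thesis by (simp add: abs_mult) (metis mult.commute mult_left_mono norm_ge_zero)
  qed simp
  fix y
  have "f (y - f y *\<^sub>R u) = 0" using u by (simp add: blinfun.diff_right blinfun.scaleR_right)
  then have "\<bar>g (y - f y *\<^sub>R u)\<bar> \<le> \<epsilon> * norm (y - f y *\<^sub>R u)" by (rule ker)
  moreover have "g (y - f y *\<^sub>R u) = (g - g u *\<^sub>R f) y"
    by (simp add: blinfun.diff_right blinfun.scaleR_right minus_blinfun.rep_eq scaleR_blinfun.rep_eq)
  moreover have "norm (y - f y *\<^sub>R u) \<le> 3 * norm y"
  proof -
    have "\<bar>f y\<bar> * norm u \<le> norm y * 2"
      using norm_blinfun[of f y] f u by (intro mult_mono) auto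
    then show ?thesis using norm_triangle_ineq4[of y "f y *\<^sub>R u"] by simp
  qed
  ultimately show "norm ((g - g u *\<^sub>R f) y) \<le> 3 * \<epsilon> * norm y"
    using mult_left_mono[OF \<open>norm (y - f y *\<^sub>R u) \<le> 3 * norm y\<close> \<open>0 \<le> \<epsilon>\<close>] by simp
qed (use \<open>0 \<le> \<epsilon>\<close> in simp)

lemma norm_diff_le_of_near_multiple:
  fixes f g :: "'a::real_normed_vector \<Rightarrow>\<^sub>L real"
  assumes f: "norm f = 1" and g: "1 - \<eta> < norm g" "norm g \<le> 1" and gl: "norm (g - l *\<^sub>R f) \<le> 6 * \<eta>"
    and v: "norm v = 1" "1 / 2 < f v" "g (- v) < 2 * \<eta>" and \<eta>: "0 < \<eta>" "\<eta> \<le> 1 / 24"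
  shows "norm (f - g) \<le> 13 * \<eta>"
proof -
  have "norm (l *\<^sub>R f) = \<bar>l\<bar>" using f by simp
  then have l: "1 - 7 * \<eta> \<le> \<bar>l\<bar>" "\<bar>l\<bar> \<le> 1 + 6 * \<eta>"
    using norm_triangle_ineq2[of g "l *\<^sub>R f"] norm_triangle_ineq3[of g "l *\<^sub>R f"] g gl by linarith+
  have "0 < l"
  proof (rule ccontr)
    assume "\<not> 0 < l"
    have "\<bar>(g - l *\<^sub>R f) (- v)\<bar> \<le> 6 * \<eta>"
      using norm_blinfun[of "g - l *\<^sub>R f" "- v"] gl v(1) by simp
    then have "l * f (- v) - 6 * \<eta> \<le> g (- v)"
      by (simp add: minus_blinfun.rep_eq scaleR_blinfun.rep_eq blinfun.minus_right)
    moreover have "(1 - 7 * \<eta>) * 1 \<le> (- l) * (2 * f v)"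
      using l v(2) \<open>\<not> 0 < l\<close> \<eta> by (intro mult_mono) auto
    ultimately show False using v(3) \<eta> by (simp add: blinfun.minus_right)
  qed
  have "norm (f - g) \<le> norm ((1 - l) *\<^sub>R f) + norm (g - l *\<^sub>R f)"
    using norm_triangle_ineq4[of "(1 - l) *\<^sub>R f" "g - l *\<^sub>R f"] by (simp add: algebra_simps)
  then show ?thesis using l \<open>0 < l\<close> gl f by simp
qed

lemma dual_slice_near_of_half_ball_cover:
  fixes f :: "'a::real_normed_vector \<Rightarrow>\<^sub>L real"
  assumes f: "norm f = 1" and \<eta>: "0 < \<eta>" "\<eta> \<le> 1 / 24" and u: "f u = 1" "norm u \<le> 2"
    and cover: "half_ball f \<subseteq> cball z R" and out: "R < norm (\<eta> *\<^sub>R u - z)"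
  shows "dual_slice ((1 / norm (\<eta> *\<^sub>R u - z)) *\<^sub>R (\<eta> *\<^sub>R u - z))
           (max (R / norm (\<eta> *\<^sub>R u - z)) (1 - \<eta>)) \<subseteq> ball f (14 * \<eta>)"
    (is "dual_slice ((1 / ?N) *\<^sub>R _) _ \<subseteq> _")
proof
  fix g assume "g \<in> dual_slice ((1 / ?N) *\<^sub>R (\<eta> *\<^sub>R u - z)) (max (R / ?N) (1 - \<eta>))"
  then have g: "norm g \<le> 1" "max (R / ?N) (1 - \<eta>) < g (\<eta> *\<^sub>R u - z) / ?N"
    by (simp_all add: dual_slice_def blinfun.scaleR_right)
  have "0 \<le> R" using cover by (rule radius_nonneg_of_half_ball_subset)
  then have "0 < ?N" using out by linarith
  have "1 - \<eta> < norm g"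
  proof -
    have "g (\<eta> *\<^sub>R u - z) / ?N \<le> norm g" using norm_blinfun[of g "\<eta> *\<^sub>R u - z"] \<open>0 < ?N\<close>
      by (simp add: pos_divide_le_eq)
    then show ?thesis using g(2) by simp
  qed
  have gy: "g y < 2 * \<eta>" if "y \<in> half_ball f" for y
  proof -
    have "g (y - z) \<le> R"
      using cover that blinfun_apply_le_norm[OF g(1), of "y - z"] by (auto simp: dist_norm norm_minus_commute)
    moreover have "R < g (\<eta> *\<^sub>R u - z)" using g(2) \<open>0 < ?N\<close> by (simp add: pos_less_divide_eq)
    moreover have "g (\<eta> *\<^sub>R u) \<le> 2 * \<eta>"
    proof -
      have "g (\<eta> *\<^sub>R u) \<le> \<eta> * norm u"
        using blinfun_apply_le_norm[OF g(1), of "\<eta> *\<^sub>R u"] \<eta>(1) by simp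
      moreover have "\<eta> * norm u \<le> \<eta> * 2" using u(2) \<eta>(1) by (intro mult_left_mono) auto
      ultimately show ?thesis by linarith
    qed
    ultimately show ?thesis by (simp add: blinfun.diff_right)
  qed
  obtain v where v: "norm v = 1" "1 / 2 < f v" using norm_blinfun_approx[of "1 / 2" f] f by auto
  then have "- v \<in> half_ball f" by (simp add: half_ball_def blinfun.minus_right)
  have "norm (g - g u *\<^sub>R f) \<le> 6 * \<eta>"
    using norm_diff_multiple_le_of_half_ball[OF f u, of "2 * \<eta>" g] gy \<eta>(1) by simp
  then have "norm (f - g) \<le> 13 * \<eta>"
    using norm_diff_le_of_near_multiple[OF f \<open>1 - \<eta> < norm g\<close> g(1) _ v gy[OF \<open>- v \<in> half_ball f\<close>] \<eta>]
    by blast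
  then show "g \<in> ball f (14 * \<eta>)" using \<eta>(1) by (simp add: dist_norm)
qed

theorem mazur_intersection_imp_wstar_semidenting:
  fixes X :: "'a::real_normed_vector itself" and f :: "'a \<Rightarrow>\<^sub>L real"
  assumes mip: "mazur_intersection_property X" and f: "norm f = 1"
  shows "wstar_semidenting f"
  unfolding wstar_semidenting_def
proof (intro conjI allI impI f)
  fix \<epsilon> :: real assume "0 < \<epsilon>"
  define \<eta> where "\<eta> = min (\<epsilon> / 14) (1 / 24)"
  have \<eta>: "0 < \<eta>" "\<eta> \<le> 1 / 24" "14 * \<eta> \<le> \<epsilon>" using \<open>0 < \<epsilon>\<close> by (auto simp: \<eta>_def)
  obtain u where u: "f u = 1" "norm u \<le> 2" using exists_preimage_one[OF f] by blast
  have "\<eta> *\<^sub>R u \<notin> half_ball f" using u \<eta> by (simp add: half_ball_def blinfun.scaleR_right)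
  moreover have "half_ball f = \<Inter> {cball x r | x r. half_ball f \<subseteq> cball x r}"
    using mip closed_half_ball bounded_half_ball convex_half_ball zero_in_half_ball
    unfolding mazur_intersection_property_def by blast
  ultimately obtain z R where zR: "half_ball f \<subseteq> cball z R" "\<eta> *\<^sub>R u \<notin> cball z R" by blast
  define N where "N = norm (\<eta> *\<^sub>R u - z)"
  have "R < N" using zR(2) by (simp add: N_def dist_norm norm_minus_commute)
  have "0 \<le> R" using zR(1) by (rule radius_nonneg_of_half_ball_subset)
  have "dual_slice ((1 / N) *\<^sub>R (\<eta> *\<^sub>R u - z)) (max (R / N) (1 - \<eta>)) \<subseteq> ball f \<epsilon>"
    using dual_slice_near_of_half_ball_cover[OF f \<eta>(1,2) u zR(1)] \<open>R < N\<close> subset_ball[OF \<eta>(3)]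
    unfolding N_def by blast
  moreover have "norm ((1 / N) *\<^sub>R (\<eta> *\<^sub>R u - z)) = 1" using \<open>0 \<le> R\<close> \<open>R < N\<close> by (auto simp: N_def)
  moreover have "0 < max (R / N) (1 - \<eta>)" "max (R / N) (1 - \<eta>) < 1"
    using \<open>0 \<le> R\<close> \<open>R < N\<close> \<eta> by auto
  ultimately show "\<exists>\<alpha> x. 0 < \<alpha> \<and> \<alpha> < 1 \<and> norm x = 1 \<and> dual_slice x \<alpha> \<subseteq> ball f \<epsilon>" by blast
qed

text \<open>Norming \<open>w - (z - R x)\<close> by a functional \<open>k\<close>: either \<open>k\<close> lies in the slice, and then
  \<open>k (w - z) \<le> 0\<close>, or \<open>k x \<le> \<alpha>\<close>; the radius \<open>R = M / (1 - \<alpha>)\<close> handles both cases.\<close>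
lemma mem_cball_of_dual_slice:
  fixes g :: "'a::real_normed_vector \<Rightarrow>\<^sub>L real"
  assumes x: "norm x = 1" and \<alpha>: "\<alpha> < 1"
    and sl: "\<And>k. k \<in> dual_slice x \<alpha> \<Longrightarrow> norm (k - g) < \<epsilon>"
    and w: "norm (w - z) \<le> M" "g (w - z) \<le> - \<epsilon> * norm (w - z)"
  shows "w \<in> cball (z - (M / (1 - \<alpha>)) *\<^sub>R x) (M / (1 - \<alpha>))"
proof -
  define R where "R = M / (1 - \<alpha>)"
  have "0 \<le> M" using w(1) norm_ge_zero order_trans by blast
  then have "0 \<le> R" "R * \<alpha> + M = R" using \<alpha> by (simp_all add: R_def field_simps)
  obtain k :: "'a \<Rightarrow>\<^sub>L real" where k: "norm k \<le> 1" "k (w - (z - R *\<^sub>R x)) = norm (w - (z - R *\<^sub>R x))"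
    using norming_functional by blast
  have "w - (z - R *\<^sub>R x) = (w - z) + R *\<^sub>R x" by (simp add: algebra_simps)
  then have eq: "norm (w - (z - R *\<^sub>R x)) = k (w - z) + R * k x"
    using k(2) by (metis blinfun.add_right blinfun.scaleR_right real_scaleR_def)
  have "k x \<le> 1" using blinfun_apply_le_norm[OF k(1), of x] x by simp
  have "norm (w - (z - R *\<^sub>R x)) \<le> R"
  proof (cases "\<alpha> < k x")
    case True
    then have "norm (k - g) < \<epsilon>" using k(1) by (intro sl dual_sliceI)
    then have "(k - g) (w - z) \<le> \<epsilon> * norm (w - z)"
      using norm_blinfun[of "k - g" "w - z"] mult_right_mono[of "norm (k - g)" \<epsilon> "norm (w - z)"]
      by simp
    then have "k (w - z) \<le> 0" using w(2) by (simp add: minus_blinfun.rep_eq)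
    moreover have "R * k x \<le> R" using \<open>k x \<le> 1\<close> \<open>0 \<le> R\<close> by (simp add: mult_left_le)
    ultimately show ?thesis using eq by linarith
  next
    case False
    have "k (w - z) \<le> M" using blinfun_apply_le_norm[OF k(1), of "w - z"] w(1) by linarith
    moreover have "R * k x \<le> R * \<alpha>" using False \<open>0 \<le> R\<close> by (simp add: mult_left_mono)
    ultimately show ?thesis using eq \<open>R * \<alpha> + M = R\<close> by linarith
  qed
  then show ?thesis by (simp add: R_def dist_norm norm_minus_commute)
qed

lemma blinfun_le_of_mem_cball:
  fixes g :: "'a::real_normed_vector \<Rightarrow>\<^sub>L real"
  assumes "norm g \<le> 1" "g x = 1" "b \<in> cball (z - R *\<^sub>R x) R"
  shows "g b \<le> g z"
proof -
  have "g (b - (z - R *\<^sub>R x)) \<le> R"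
    using blinfun_apply_le_norm[OF assms(1)] assms(3) order_trans
    by (metis dist_norm mem_cball norm_minus_commute)
  then show ?thesis using assms(2) by (simp add: blinfun.diff_right blinfun.scaleR_right)
qed

lemma cball_cover_of_separating_functional:
  fixes f :: "'a::real_normed_vector \<Rightarrow>\<^sub>L real" and C :: "'a set"
  assumes f: "norm f = 1" and sep: "\<And>c. c \<in> C \<Longrightarrow> f c + 3 * r / 4 \<le> f q"
    and bdd: "\<And>c. c \<in> C \<Longrightarrow> norm (c - q) \<le> D + r" and "0 < r" "0 \<le> D"
    and \<alpha>: "\<alpha> < 1" and x: "norm x = 1" and sl: "dual_slice x \<alpha> \<subseteq> ball f (r / (4 * (3 * D + 4 * r)))"
  obtains ctr and g :: "'a \<Rightarrow>\<^sub>L real" where "C \<subseteq> cball ctr ((D + 3 * r / 2) / (1 - \<alpha>))" "norm g \<le> 1"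
    "\<And>b. b \<in> cball ctr ((D + 3 * r / 2) / (1 - \<alpha>)) \<Longrightarrow> g b + r / 2 \<le> g q"
proof -
  define \<epsilon> where "\<epsilon> = r / (4 * (3 * D + 4 * r))"
  have "0 < 3 * D + 4 * r" using \<open>0 < r\<close> \<open>0 \<le> D\<close> by simp
  then have "0 < \<epsilon>" using \<open>0 < r\<close> by (simp add: \<epsilon>_def)
  have "\<epsilon> * (3 * D + 4 * r) = r / 4" using \<open>0 < 3 * D + 4 * r\<close> by (simp add: \<epsilon>_def field_simps)
  obtain g :: "'a \<Rightarrow>\<^sub>L real" where g: "norm g = 1" "g x = 1" "norm (f - g) < \<epsilon>"
    using norm_diff_lt_of_dual_slice_norming[OF sl[folded \<epsilon>_def] \<alpha> x] by blast
  have near: "norm (k - g) < 2 * \<epsilon>" if "k \<in> dual_slice x \<alpha>" for k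
    using norm_diff_lt_of_dual_slice[OF sl[folded \<epsilon>_def] that] g(3)
      norm_triangle_ineq[of "k - f" "f - g"] by (simp add: norm_minus_commute)
  define z where "z = q - (r / 2) *\<^sub>R x"
  define M where "M = D + 3 * r / 2"
  have "w \<in> cball (z - (M / (1 - \<alpha>)) *\<^sub>R x) (M / (1 - \<alpha>))" if "w \<in> C" for w
  proof (rule mem_cball_of_dual_slice[OF x \<alpha> near])
    have "norm (w - z) \<le> norm (w - q) + norm (q - z)" using norm_triangle_ineq[of "w - q" "q - z"] by simp
    then show "norm (w - z) \<le> M" using bdd[OF that] x \<open>0 < r\<close> by (simp add: z_def M_def)
    have "(g - f) (w - q) \<le> \<epsilon> * (D + r)"
      using norm_blinfun[of "g - f" "w - q"] g(3) bdd[OF that] \<open>0 < \<epsilon>\<close>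
        mult_mono[of "norm (g - f)" \<epsilon> "norm (w - q)" "D + r"] by (simp add: norm_minus_commute)
    then have "g (w - z) \<le> - 3 * r / 4 + \<epsilon> * (D + r) + r / 2"
      using sep[OF that] g(2) by (simp add: z_def minus_blinfun.rep_eq blinfun.diff_right blinfun.scaleR_right)
    also have "\<dots> = - 2 * \<epsilon> * M" using \<open>\<epsilon> * (3 * D + 4 * r) = r / 4\<close> by (simp add: M_def algebra_simps)
    also have "\<dots> \<le> - 2 * \<epsilon> * norm (w - z)" using \<open>norm (w - z) \<le> M\<close> \<open>0 < \<epsilon>\<close> by simp
    finally show "g (w - z) \<le> - (2 * \<epsilon>) * norm (w - z)" by simp
  qed
  moreover have "g b + r / 2 \<le> g q" if "b \<in> cball (z - (M / (1 - \<alpha>)) *\<^sub>R x) (M / (1 - \<alpha>))" for b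
    using blinfun_le_of_mem_cball[OF _ g(2) that] g by (simp add: z_def blinfun.diff_right blinfun.scaleR_right)
  ultimately show ?thesis
    using g(1) by (intro that[of "z - (M / (1 - \<alpha>)) *\<^sub>R x" g]) (auto simp: M_def)
qed

lemma point_toward_at_dist:
  fixes p c :: "'a::real_normed_vector"
  assumes "0 < r" "r \<le> dist p c"
  obtains p' where "dist p' c = r" "dist p p' = dist p c - r" "p - p' = ((dist p c - r) / r) *\<^sub>R (p' - c)"
proof -
  define L where "L = dist p c"
  have "norm (p - c) = L" by (simp add: L_def dist_norm)
  have "0 < L" using assms unfolding L_def by linarith
  define p' where "p' = c + (r / L) *\<^sub>R (p - c)"
  have p'_c: "p' - c = (r / L) *\<^sub>R (p - c)" and p_p': "p - p' = (1 - r / L) *\<^sub>R (p - c)"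
    by (simp_all add: p'_def algebra_simps)
  have "dist p' c = r" "dist p p' = L - r"
    using assms \<open>norm (p - c) = L\<close> unfolding dist_norm p'_c p_p' norm_scaleR L_def[symmetric]
    by (simp_all add: field_simps)
  moreover have "(L - r) / r * (r / L) = 1 - r / L" using \<open>0 < r\<close> \<open>0 < L\<close> by (simp add: field_simps)
  then have "p - p' = ((L - r) / r) *\<^sub>R (p' - c)" by (simp add: p'_c p_p')
  ultimately show ?thesis using that by (simp add: L_def)
qed

text \<open>Rather than \<open>p\<close> itself, the point \<open>p'\<close> at distance \<open>r\<close> from an almost nearest point of
  \<open>C\<close> is separated from \<open>C\<close>: it is still \<open>7r/8\<close>-far from \<open>C\<close>, and \<open>C\<close> stays within
  \<open>D + r\<close> of it, so the radius of the ball does not depend on \<open>p\<close>.\<close>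
lemma far_cball_cover:
  fixes C :: "'a::real_normed_vector set"
  assumes C: "convex C" "C \<noteq> {}" and diam: "\<And>w w'. w \<in> C \<Longrightarrow> w' \<in> C \<Longrightarrow> dist w w' \<le> D"
    and "0 < r" "r \<le> infdist p C"
    and sd: "\<And>f :: 'a \<Rightarrow>\<^sub>L real. norm f = 1 \<Longrightarrow>
      \<exists>\<alpha>\<in>A. \<exists>x. \<alpha> < 1 \<and> norm x = 1 \<and> dual_slice x \<alpha> \<subseteq> ball f (r / (4 * (3 * D + 4 * r)))"
  obtains ctr \<alpha> where "\<alpha> \<in> A" "C \<subseteq> cball ctr ((D + 3 * r / 2) / (1 - \<alpha>))"
    "r / 2 \<le> infdist p (cball ctr ((D + 3 * r / 2) / (1 - \<alpha>)))"
proof -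
  obtain cs where "cs \<in> C" and cs: "dist p cs < infdist p C + r / 8"
    using infdist_approx[OF C(2), of "r / 8" p] \<open>0 < r\<close> by auto
  have "0 \<le> D" using diam[OF \<open>cs \<in> C\<close> \<open>cs \<in> C\<close>] by simp
  have far: "r \<le> dist p c" if "c \<in> C" for c using infdist_le[OF that, of p] \<open>r \<le> infdist p C\<close> by simp
  obtain p' where p': "dist p' cs = r" "dist p p' = dist p cs - r"
    "p - p' = ((dist p cs - r) / r) *\<^sub>R (p' - cs)"
    using point_toward_at_dist[OF \<open>0 < r\<close> far[OF \<open>cs \<in> C\<close>]] by blast
  have "7 * r / 8 \<le> dist p' c" if "c \<in> C" for c
    using dist_triangle[of p c p'] infdist_le[OF that, of p] cs p'(2) by (simp add: dist_commute)
  then obtain f :: "'a \<Rightarrow>\<^sub>L real" where f: "norm f = 1" "\<And>c. c \<in> C \<Longrightarrow> f c + 3 * r / 4 \<le> f p'"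
    using separating_unit_functional[OF C, of "3 * r / 4" "7 * r / 8" p'] \<open>0 < r\<close>
    by (auto simp: dist_commute)
  have bdd: "norm (c - p') \<le> D + r" if "c \<in> C" for c
    using dist_triangle[of c p' cs] diam[OF that \<open>cs \<in> C\<close>] p'(1) by (simp add: dist_norm norm_minus_commute)
  obtain \<alpha> x where "\<alpha> \<in> A" "\<alpha> < 1" "norm x = 1" "dual_slice x \<alpha> \<subseteq> ball f (r / (4 * (3 * D + 4 * r)))"
    using sd[OF f(1)] by blast
  then obtain ctr and g :: "'a \<Rightarrow>\<^sub>L real" where cover: "C \<subseteq> cball ctr ((D + 3 * r / 2) / (1 - \<alpha>))"
    and g: "norm g \<le> 1" "\<And>b. b \<in> cball ctr ((D + 3 * r / 2) / (1 - \<alpha>)) \<Longrightarrow> g b + r / 2 \<le> g p'"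
    using cball_cover_of_separating_functional[OF f bdd \<open>0 < r\<close> \<open>0 \<le> D\<close>] by metis
  have "0 \<le> g (p' - cs)" using g(2)[of cs] cover \<open>cs \<in> C\<close> \<open>0 < r\<close> by (auto simp: blinfun.diff_right)
  then have "0 \<le> g (p - p')"
    using p'(3) far[OF \<open>cs \<in> C\<close>] \<open>0 < r\<close> by (simp add: blinfun.scaleR_right)
  have "r / 2 \<le> infdist p (cball ctr ((D + 3 * r / 2) / (1 - \<alpha>)))"
  proof (rule infdist_greatest)
    show "cball ctr ((D + 3 * r / 2) / (1 - \<alpha>)) \<noteq> {}" using cover \<open>cs \<in> C\<close> by blast
    fix b assume "b \<in> cball ctr ((D + 3 * r / 2) / (1 - \<alpha>))"
    then show "r / 2 \<le> dist p b"
      using g(2)[of b] \<open>0 \<le> g (p - p')\<close> blinfun_apply_le_norm[OF g(1), of "p - b"]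
      by (simp add: dist_norm blinfun.diff_right)
  qed
  with \<open>\<alpha> \<in> A\<close> cover show ?thesis by (rule that)
qed

theorem wstar_semidenting_imp_mazur_intersection:
  fixes X :: "'a::real_normed_vector itself"
  assumes sd: "\<And>f :: 'a \<Rightarrow>\<^sub>L real. norm f = 1 \<Longrightarrow> wstar_semidenting f"
  shows "mazur_intersection_property X"
  unfolding mazur_intersection_property_def
proof (intro allI impI equalityI subsetI)
  fix C :: "'a set" and p assume C: "closed C \<and> bounded C \<and> convex C \<and> C \<noteq> {}"
    and p: "p \<in> \<Inter> {cball x r | x r. C \<subseteq> cball x r}"
  show "p \<in> C"
  proof (rule ccontr)
    assume "p \<notin> C"
    define r where "r = infdist p C"
    have "0 < r" using infdist_pos_not_in_closed[of C p] C \<open>p \<notin> C\<close> by (simp add: r_def)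
    have diam: "dist w w' \<le> diameter C" if "w \<in> C" "w' \<in> C" for w w'
      using C diameter_bounded_bound that by blast
    have "0 < r / (4 * (3 * diameter C + 4 * r))" using \<open>0 < r\<close> diameter_ge_0[of C] C by simp
    then have slice: "\<exists>\<alpha>\<in>UNIV. \<exists>x. \<alpha> < 1 \<and> norm x = 1 \<and>
        dual_slice x \<alpha> \<subseteq> ball f (r / (4 * (3 * diameter C + 4 * r)))"
      if "norm f = 1" for f :: "'a \<Rightarrow>\<^sub>L real"
      using sd[OF that] unfolding wstar_semidenting_def by blast
    obtain ctr \<alpha> where "C \<subseteq> cball ctr ((diameter C + 3 * r / 2) / (1 - \<alpha>))"
      "r / 2 \<le> infdist p (cball ctr ((diameter C + 3 * r / 2) / (1 - \<alpha>)))"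
      by (rule far_cball_cover[of C "diameter C" r p UNIV]) (use C diam \<open>0 < r\<close> slice in \<open>auto simp: r_def\<close>)
    then show False using p \<open>0 < r\<close> by force
  qed
qed blast

theorem mazur_intersection_iff_d0_star_pos:
  fixes X :: "'a::real_normed_vector itself"
  shows "mazur_intersection_property X \<longleftrightarrow>
     (\<forall>(f :: 'a \<Rightarrow>\<^sub>L real) t. norm f = 1 \<and> 0 < t \<and> t < 2 \<longrightarrow> 0 < d0_star f t)"
  using mazur_intersection_imp_wstar_semidenting wstar_semidenting_imp_mazur_intersection
    wstar_semidenting_iff_d0_star_pos by blast

section \<open>The uniform Mazur intersection property\<close>

lemma diameter_half_ball_le: "diameter (half_ball f) \<le> 2"
proof (rule diameter_le)
  fix x y assume "x \<in> half_ball f" "y \<in> half_ball f"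
  then have "norm x \<le> 1" "norm y \<le> 1" by (simp_all add: half_ball_def)
  then show "norm (x - y) \<le> 2" using norm_triangle_ineq4[of x y] by simp
qed simp

lemma infdist_half_ball_ge:
  fixes f :: "'a::real_normed_vector \<Rightarrow>\<^sub>L real"
  assumes "norm f = 1" "f u = 1" "0 \<le> \<eta>"
  shows "\<eta> \<le> infdist (\<eta> *\<^sub>R u) (half_ball f)"
proof (rule infdist_greatest)
  fix y assume "y \<in> half_ball f"
  then have "\<eta> \<le> f (\<eta> *\<^sub>R u - y)" using assms(2) by (simp add: half_ball_def blinfun.diff_right blinfun.scaleR_right)
  then show "\<eta> \<le> dist (\<eta> *\<^sub>R u) y" using blinfun_apply_le_norm[of f "\<eta> *\<^sub>R u - y"] assms(1)
    by (simp add: dist_norm)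
qed (use zero_in_half_ball in blast)

lemma add_infdist_cball_le_dist:
  fixes p z :: "'a::real_normed_vector"
  assumes "0 \<le> R" "0 < infdist p (cball z R)"
  shows "R + infdist p (cball z R) \<le> dist p z"
proof -
  define N where "N = dist p z"
  have "R < N"
  proof (rule ccontr)
    assume "\<not> R < N"
    then have "p \<in> cball z R" by (simp add: N_def dist_commute)
    then show False using assms(2) by simp
  qed
  define b where "b = z + (R / N) *\<^sub>R (p - z)"
  have pb: "p - b = (1 - R / N) *\<^sub>R (p - z)" by (simp add: b_def algebra_simps)
  have "norm (p - z) = N" by (simp add: N_def dist_norm)
  then have "dist p b = N - R"
    using \<open>0 \<le> R\<close> \<open>R < N\<close> unfolding dist_norm pb norm_scaleR by (simp add: field_simps)
  moreover have "b \<in> cball z R" using \<open>0 \<le> R\<close> \<open>R < N\<close> by (simp add: b_def dist_norm N_def)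
  ultimately show ?thesis using infdist_le[of b "cball z R" p] by (simp add: N_def)
qed

lemma dual_slice_near_of_uniform_half_ball_cover:
  fixes f :: "'a::real_normed_vector \<Rightarrow>\<^sub>L real"
  assumes f: "norm f = 1" and \<eta>: "0 < \<eta>" "\<eta> \<le> 1 / 24" and u: "f u = 1" "norm u \<le> 2"
    and cover: "half_ball f \<subseteq> cball z R" and gap: "R + e \<le> norm (\<eta> *\<^sub>R u - z)" "0 < e" and "R \<le> K"
  obtains x where "norm x = 1" "dual_slice x (max (K / (K + e)) (1 - \<eta>)) \<subseteq> ball f (14 * \<eta>)"
proof -
  define N where "N = norm (\<eta> *\<^sub>R u - z)"
  define x where "x = (1 / N) *\<^sub>R (\<eta> *\<^sub>R u - z)"
  have "0 \<le> R" using cover by (rule radius_nonneg_of_half_ball_subset)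
  then have "R < N" using gap by (simp add: N_def)
  with \<open>0 \<le> R\<close> have "0 < N" by linarith
  have "R / N \<le> R / (R + e)"
    using gap \<open>0 \<le> R\<close> \<open>0 < N\<close> by (intro divide_left_mono) (simp_all add: N_def[symmetric])
  also have "\<dots> \<le> K / (K + e)" using \<open>0 \<le> R\<close> \<open>R \<le> K\<close> \<open>0 < e\<close> by (simp add: field_simps)
  finally have "dual_slice x (max (K / (K + e)) (1 - \<eta>)) \<subseteq> dual_slice x (max (R / N) (1 - \<eta>))"
    by (intro dual_slice_antimono) simp
  also have "\<dots> \<subseteq> ball f (14 * \<eta>)"
    using dual_slice_near_of_half_ball_cover[OF f \<eta> u cover] \<open>R < N\<close> by (simp add: x_def N_def)
  finally have "dual_slice x (max (K / (K + e)) (1 - \<eta>)) \<subseteq> ball f (14 * \<eta>)" .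
  moreover have "norm x = 1" using \<open>0 < N\<close> by (simp add: x_def N_def[symmetric])
  ultimately show ?thesis using that by blast
qed

theorem d0_star_mod_pos_imp_uniform_mazur_intersection:
  fixes X :: "'a::real_normed_vector itself"
  assumes pos: "\<forall>t. 0 < t \<and> t < 2 \<longrightarrow> 0 < d0_star_mod X t"
  shows "uniform_mazur_intersection_property X"
  unfolding uniform_mazur_intersection_property_def
proof (intro allI impI)
  fix r :: real assume "0 < r"
  define \<epsilon> where "\<epsilon> = r / (4 * (3 * (1 / r) + 4 * r))"
  define t where "t = min (\<epsilon> / 2) 1"
  have "0 < 4 * (3 * (1 / r) + 4 * r)" using \<open>0 < r\<close> by (intro mult_pos_pos add_pos_pos) auto
  then have "0 < \<epsilon>" using \<open>0 < r\<close> unfolding \<epsilon>_def by (rule divide_pos_pos[rotated])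
  then have t: "0 < t" "t < 2" "3 * t / 2 < \<epsilon>" by (auto simp: t_def)
  then obtain c where "0 < ereal c" "ereal c < d0_star_mod X t"
    using pos ereal_dense2 by blast
  define \<alpha> where "\<alpha> = max (1 / (1 + c)) (1 / (1 + t / 4))"
  have "\<alpha> < 1" using \<open>0 < ereal c\<close> t by (simp add: \<alpha>_def)
  have slice: "\<exists>\<alpha>'\<in>{\<alpha>}. \<exists>x. \<alpha>' < 1 \<and> norm x = 1 \<and> dual_slice x \<alpha>' \<subseteq> ball f \<epsilon>"
    if "norm f = 1" for f :: "'a \<Rightarrow>\<^sub>L real"
  proof -
    have "d0_star_mod X t \<le> d0_star f t" using that by (auto simp: d0_star_mod_def intro: Inf_lower)
    then obtain x where "norm x = 1" "dual_slice x \<alpha> \<subseteq> ball f (3 * t / 2)"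
      using dual_slice_near_of_d0_star[OF t(1,2)] \<open>0 < ereal c\<close> \<open>ereal c < d0_star_mod X t\<close>
      unfolding \<alpha>_def by (metis ereal_less(2) order_less_le_trans)
    then show ?thesis using \<open>\<alpha> < 1\<close> subset_ball[of "3 * t / 2" \<epsilon> f] t(3) by auto
  qed
  define K where "K = (1 / r + 3 * r / 2) / (1 - \<alpha>)"
  have "0 < K" using \<open>0 < r\<close> \<open>\<alpha> < 1\<close> unfolding K_def by (intro divide_pos_pos add_pos_pos) auto
  moreover have "\<exists>x0 r0. C \<subseteq> cball x0 r0 \<and> r / 2 \<le> infdist p (cball x0 r0) \<and> r0 \<le> K"
    if C: "closed C \<and> bounded C \<and> convex C \<and> C \<noteq> {} \<and> diameter C < 1 / r \<and> r \<le> infdist p C"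
    for C :: "'a set" and p
  proof -
    have diam: "dist w w' \<le> 1 / r" if "w \<in> C" "w' \<in> C" for w w'
      using diameter_bounded_bound[of C w w'] C that by linarith
    obtain ctr \<alpha>' where "\<alpha>' \<in> {\<alpha>}" "C \<subseteq> cball ctr ((1 / r + 3 * r / 2) / (1 - \<alpha>'))"
      "r / 2 \<le> infdist p (cball ctr ((1 / r + 3 * r / 2) / (1 - \<alpha>')))"
      by (rule far_cball_cover[of C "1 / r" r p "{\<alpha>}"]) (use C diam \<open>0 < r\<close> slice in \<open>auto simp: \<epsilon>_def\<close>)
    then show ?thesis unfolding K_def by blast
  qed
  ultimately show "\<exists>K>0. \<forall>(C::'a set) p. closed C \<and> bounded C \<and> convex C \<and> C \<noteq> {} \<and>
      diameter C < 1 / r \<and> r \<le> infdist p C \<longrightarrow>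
      (\<exists>x0 r0. C \<subseteq> cball x0 r0 \<and> r / 2 \<le> infdist p (cball x0 r0) \<and> r0 \<le> K)"
    by blast
qed

theorem uniform_mazur_intersection_imp_d0_star_mod_pos:
  fixes X :: "'a::real_normed_vector itself"
  assumes umip: "uniform_mazur_intersection_property X"
    and t: "0 < t" "t < 2"
  shows "0 < d0_star_mod X t"
proof -
  define \<eta> where "\<eta> = min (t / 224) (1 / 24)"
  have \<eta>: "0 < \<eta>" "\<eta> \<le> 1 / 24" "14 * \<eta> \<le> t / 16" using t by (auto simp: \<eta>_def)
  \<comment> \<open>the separation distance fed to the uniform property; \<open>\<le> 1/3\<close> makes every half ball admissible\<close>
  define \<eta>' where "\<eta>' = min \<eta> (1 / 3)"
  have \<eta>': "0 < \<eta>'" "\<eta>' \<le> \<eta>" "2 < 1 / \<eta>'" using \<eta> by (auto simp: \<eta>'_def field_simps)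
  obtain K where "0 < K" and K: "\<forall>(C :: 'a set) p. closed C \<and> bounded C \<and> convex C \<and> C \<noteq> {} \<and>
      diameter C < 1 / \<eta>' \<and> \<eta>' \<le> infdist p C \<longrightarrow>
      (\<exists>x0 r0. C \<subseteq> cball x0 r0 \<and> \<eta>' / 2 \<le> infdist p (cball x0 r0) \<and> r0 \<le> K)"
    using umip \<open>0 < \<eta>'\<close> unfolding uniform_mazur_intersection_property_def by blast
  define \<alpha> where "\<alpha> = max (K / (K + \<eta>' / 2)) (1 - \<eta>)"
  have \<alpha>: "0 < \<alpha>" "\<alpha> < 1" using \<open>0 < K\<close> \<eta> \<eta>' by (auto simp: \<alpha>_def)
  define c where "c = min (t / 16) ((1 / \<alpha> - 1) / 2)"
  have "0 < c" using t \<alpha> by (simp add: c_def field_simps)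
  have "ereal c \<le> d0_star f t" if f: "norm f = 1" for f :: "'a \<Rightarrow>\<^sub>L real"
  proof -
    obtain u where u: "f u = 1" "norm u \<le> 2" using exists_preimage_one[OF f] by blast
    have "\<eta>' \<le> infdist (\<eta> *\<^sub>R u) (half_ball f)"
      using infdist_half_ball_ge[OF f u(1), of \<eta>] \<eta>(1) \<eta>'(2) by linarith
    then obtain z R where zR: "half_ball f \<subseteq> cball z R" "\<eta>' / 2 \<le> infdist (\<eta> *\<^sub>R u) (cball z R)" "R \<le> K"
      using K[rule_format, of "half_ball f" "\<eta> *\<^sub>R u"] closed_half_ball bounded_half_ball convex_half_ball
        zero_in_half_ball[of f] diameter_half_ball_le[of f] \<eta>'(3) by fastforce
    have "0 \<le> R" using zR(1) by (rule radius_nonneg_of_half_ball_subset)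
    then have "R + \<eta>' / 2 \<le> norm (\<eta> *\<^sub>R u - z)"
      using add_infdist_cball_le_dist[of R "\<eta> *\<^sub>R u" z] zR(2) \<open>0 < \<eta>'\<close> by (simp add: dist_norm)
    then obtain x where "norm x = 1" "dual_slice x \<alpha> \<subseteq> ball f (14 * \<eta>)"
      using dual_slice_near_of_uniform_half_ball_cover[OF f \<eta>(1,2) u zR(1)] zR(3) \<open>0 < \<eta>'\<close>
      unfolding \<alpha>_def by (metis half_gt_zero)
    then show ?thesis
      using d0_star_lower_bound_of_dual_slice[OF t(1) \<alpha> \<open>norm x = 1\<close>] subset_ball[OF \<eta>(3), of f]
      unfolding c_def by blast
  qed
  then have "ereal c \<le> d0_star_mod X t" by (auto simp: d0_star_mod_def intro: Inf_greatest)
  then show ?thesis using \<open>0 < c\<close> by (metis ereal_less(2) order_less_le_trans)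
qed

theorem uniform_mazur_intersection_iff_d0_star_mod_pos:
  fixes X :: "'a::real_normed_vector itself"
  shows "uniform_mazur_intersection_property X \<longleftrightarrow>
     (\<forall>t. 0 < t \<and> t < 2 \<longrightarrow> 0 < d0_star_mod X t)"
  using d0_star_mod_pos_imp_uniform_mazur_intersection uniform_mazur_intersection_imp_d0_star_mod_pos
  by blast

theorem mainTheorem7:
  fixes X :: "'a::banach itself"
  shows "(\<forall>f :: 'a \<Rightarrow>\<^sub>L real. norm f = 1 \<longrightarrow>
            (wstar_semidenting f \<longleftrightarrow> (\<forall>t. 0 < t \<and> t < 2 \<longrightarrow> d0_star f t > 0)))
       \<and> (mazur_intersection_property X \<longleftrightarrow>
            (\<forall>(f :: 'a \<Rightarrow>\<^sub>L real) t. norm f = 1 \<and> 0 < t \<and> t < 2 \<longrightarrow> d0_star f t > 0))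
       \<and> (uniform_mazur_intersection_property X \<longleftrightarrow>
            (\<forall>t. 0 < t \<and> t < 2 \<longrightarrow> d0_star_mod X t > 0))"
  using wstar_semidenting_iff_d0_star_pos mazur_intersection_iff_d0_star_pos
    uniform_mazur_intersection_iff_d0_star_mod_pos by blast

end
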